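(* Let $f : S\oplus V \to \mathbb{R}_{0,3}$ be a (left) holomorphic Cliffordian function on the whole space $S\oplus V\cong\mathbb{R}^4$, i.e. $D\Delta f = 0$ on $\mathbb{R}^4$. Assume that $f$ and all its partial derivatives (of all components) up to order two are bounded on $\mathbb{R}^4$. Then $f$ is constant.
   Context: $\mathbb{R}_{0,3}$ is the real Clifford algebra generated by $e_1,e_2,e_3$ with $e_ie_j+e_je_i=-2\delta_{ij}$; put $e_0=1$. $S\oplus V$ is the set of paravectors $x=x_0+x_1e_1+x_2e_2+x_3e_3$ ($x_i\in\mathbb{R}$), identified with $\mathbb{R}^4$. $D=\sum_{i=0}^3 e_i\,\partial/\partial x_i$ (acting on the left) and $\Delta=\sum_{i=0}^3\partial^2/\partial x_i^2$. A function $f$ from an open subset of $S\oplus V$ to $\mathbb{R}_{0,3}$ is (left) holomorphic Cliffordian if $D\Delta f=0$ there. *)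

theory Defs
  imports "HOL-Analysis.Analysis"
begin

text \<open>Basis blades of the Clifford algebra R_{0,3}: subsets A of {1,2,3},
  standing for e_A = e_{a1} e_{a2} ... with a1 < a2 < ... (e_{} = 1).\<close>
typedef blade = "Pow {1::nat,2,3}" by auto

instance blade :: finite
proof
  have "(UNIV :: blade set) = Abs_blade ` Pow {1,2,3}"
    by (metis Rep_blade Rep_blade_inverse image_iff UNIV_eq_I)
  then show "finite (UNIV :: blade set)" by (metis finite_Pow_iff finite_imageI finite.emptyI finite_insert)
qed

type_synonym cl03 = "real ^ blade"

text \<open>Sign in e_k e_A = csign k A * e_{A symmetric-difference {k}}, for k in {1,2,3}.\<close>
definition csign :: "nat \<Rightarrow> nat set \<Rightarrow> real" where
  "csign k A = (-1) ^ card {j\<in>A. j < k} * (if k \<in> A then -1 else 1)"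

definition symd :: "nat set \<Rightarrow> nat \<Rightarrow> nat set" where
  "symd A k = (A - {k}) \<union> ({k} - A)"

text \<open>Left multiplication by e_k (e_0 = 1).\<close>
definition emul :: "nat \<Rightarrow> cl03 \<Rightarrow> cl03" where
  "emul k u = (if k = 0 then u else
     (\<chi> B. csign k (symd (Rep_blade B) k) * u $ Abs_blade (symd (Rep_blade B) k)))"

text \<open>Paravector space S+V identified with real^4; coordinate x_k is the component
  at index (of_nat k :: 4), k = 0..3.\<close>
definition pd :: "nat \<Rightarrow> (real^4 \<Rightarrow> real) \<Rightarrow> real^4 \<Rightarrow> real" where
  "pd k g x = deriv (\<lambda>t. g (x + t *\<^sub>R axis (of_nat k :: 4) 1)) 0"

fun pds :: "nat list \<Rightarrow> (real^4 \<Rightarrow> real) \<Rightarrow> real^4 \<Rightarrow> real" where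
  "pds [] g = g"
| "pds (k # ks) g = pd k (pds ks g)"

definition C3 :: "(real^4 \<Rightarrow> real) \<Rightarrow> bool" where
  "C3 g \<longleftrightarrow> (\<forall>ks. set ks \<subseteq> {0..3} \<longrightarrow>
      (length ks < 3 \<longrightarrow> (\<forall>x. pds ks g differentiable (at x))) \<and>
      (length ks \<le> 3 \<longrightarrow> continuous_on UNIV (pds ks g)))"

definition pdv :: "nat \<Rightarrow> (real^4 \<Rightarrow> cl03) \<Rightarrow> real^4 \<Rightarrow> cl03" where
  "pdv k f x = (\<chi> B. pd k (\<lambda>y. f y $ B) x)"

definition lap :: "(real^4 \<Rightarrow> cl03) \<Rightarrow> real^4 \<Rightarrow> cl03" where
  "lap f x = (\<Sum>k<4. pdv k (pdv k f) x)"

definition Dop :: "(real^4 \<Rightarrow> cl03) \<Rightarrow> real^4 \<Rightarrow> cl03" where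
  "Dop f x = (\<Sum>k<4. emul k (pdv k f x))"

definition holo_cliff :: "(real^4 \<Rightarrow> cl03) \<Rightarrow> bool" where
  "holo_cliff f \<longleftrightarrow> (\<forall>B. C3 (\<lambda>x. f x $ B)) \<and> (\<forall>x. Dop (lap f) x = 0)"

end

theory Submission
  imports Defs
begin

text \<open>Let conj(D) = \<Sum> conj(e_k) d/dx_k be the conjugate Dirac operator, with conj(e_0) = 1 and
  conj(e_k) = -e_k. Since the e_k anticommute and square to -1, conj(D) D = \<Delta> on functions with
  symmetric second derivatives. If D \<Delta> f = 0, then \<Delta> (D f) = D (\<Delta> f) = 0, so every component
  of D f is a bounded harmonic function and hence constant by Liouville's theorem. Therefore
  \<Delta> f = conj(D) (D f) = 0, and f, being bounded and harmonic, is constant as well.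

  Liouville's theorem is proved by reflection. Let u be bounded and harmonic, p a point with
  p_k \<ge> a and p' its mirror image in the hyperplane x_k = a. The maximum principle, applied to
  \<plusminus>(u(x) - u(x')) - w(x) on the slab a \<le> x_k \<le> a + H with a quadratic barrier w satisfying
  \<Delta> w < 0, gives \<bar>u(p) - u(p')\<bar> = O(1/H). Letting H \<rightarrow> \<infinity>, u is invariant under all reflections in
  coordinate hyperplanes, hence under all translations.\<close>

section \<open>Second derivatives along lines\<close>

definition has_second_deriv_at_0 :: "(real \<Rightarrow> real) \<Rightarrow> real \<Rightarrow> bool" where
  "has_second_deriv_at_0 g d \<longleftrightarrow>
     (\<exists>e>0. \<exists>g'. (\<forall>t. \<bar>t\<bar> < e \<longrightarrow> (g has_real_derivative g' t) (at t))
                 \<and> (g' has_real_derivative d) (at 0))"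

lemma has_second_deriv_at_0I:
  assumes "e > 0" "\<And>t. \<bar>t\<bar> < e \<Longrightarrow> (g has_real_derivative g' t) (at t)"
    "(g' has_real_derivative d) (at 0)"
  shows "has_second_deriv_at_0 g d"
  using assms unfolding has_second_deriv_at_0_def by blast

lemma has_second_deriv_at_0_diff:
  assumes "has_second_deriv_at_0 g c" "has_second_deriv_at_0 h d"
  shows "has_second_deriv_at_0 (\<lambda>t. g t - h t) (c - d)"
proof -
  obtain e1 g' where "e1 > 0" "\<And>t. \<bar>t\<bar> < e1 \<Longrightarrow> (g has_real_derivative g' t) (at t)"
    "(g' has_real_derivative c) (at 0)" using assms(1) unfolding has_second_deriv_at_0_def by blast
  moreover obtain e2 h' where "e2 > 0" "\<And>t. \<bar>t\<bar> < e2 \<Longrightarrow> (h has_real_derivative h' t) (at t)"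
    "(h' has_real_derivative d) (at 0)" using assms(2) unfolding has_second_deriv_at_0_def by blast
  ultimately show ?thesis
    by (intro has_second_deriv_at_0I[of "min e1 e2" _ "\<lambda>t. g' t - h' t"]) (auto intro!: derivative_eq_intros)
qed

lemma has_second_deriv_at_0_cmult:
  assumes "has_second_deriv_at_0 g d"
  shows "has_second_deriv_at_0 (\<lambda>t. c * g t) (c * d)"
proof -
  obtain e g' where "e > 0" "\<And>t. \<bar>t\<bar> < e \<Longrightarrow> (g has_real_derivative g' t) (at t)"
    "(g' has_real_derivative d) (at 0)" using assms unfolding has_second_deriv_at_0_def by blast
  then show ?thesis
    by (intro has_second_deriv_at_0I[of e _ "\<lambda>t. c * g' t"]) (auto intro!: derivative_eq_intros)
qed

lemma has_second_deriv_at_0_reflect: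
  assumes "has_second_deriv_at_0 g d"
  shows "has_second_deriv_at_0 (\<lambda>t. g (- t)) d"
proof -
  obtain e g' where e: "e > 0" and g': "\<And>t. \<bar>t\<bar> < e \<Longrightarrow> (g has_real_derivative g' t) (at t)"
    and g'': "(g' has_real_derivative d) (at 0)" using assms unfolding has_second_deriv_at_0_def by blast
  have neg: "(uminus has_real_derivative -1) (at t)" for t :: real
    by (auto intro!: derivative_eq_intros)
  have "((\<lambda>t. g (- t)) has_real_derivative - g' (- t)) (at t)" if "\<bar>t\<bar> < e" for t
  proof -
    have "(g has_real_derivative g' (- t)) (at (- t))" using g' that by simp
    from DERIV_chain2[OF this neg] show ?thesis by simp
  qed
  moreover have "((\<lambda>t. - g' (- t)) has_real_derivative d) (at 0)"
    using DERIV_minus[OF DERIV_chain2[OF _ neg, of g' d 0]] g'' by simp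
  ultimately show ?thesis using e by (rule has_second_deriv_at_0I[rotated])
qed

lemma has_second_deriv_at_0_quadratic:
  "has_second_deriv_at_0 (\<lambda>t. a + b * t + c * t\<^sup>2) (2 * c)"
  by (rule has_second_deriv_at_0I[of 1 _ "\<lambda>t. b + 2 * c * t"]) (auto intro!: derivative_eq_intros)

lemma has_second_deriv_at_0_local_max:
  assumes "has_second_deriv_at_0 g d" "e > 0" "\<And>t. \<bar>t\<bar> < e \<Longrightarrow> g t \<le> g 0"
  shows "d \<le> 0"
proof (rule ccontr)
  assume "\<not> d \<le> 0"
  obtain e1 g' where e1: "e1 > 0" and g': "\<And>t. \<bar>t\<bar> < e1 \<Longrightarrow> (g has_real_derivative g' t) (at t)"
    and g'': "(g' has_real_derivative d) (at 0)" using assms(1) unfolding has_second_deriv_at_0_def by blast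
  have "g' 0 = 0"
    by (rule DERIV_local_max[of g _ 0 "min e e1"]) (use g' e1 assms(2,3) in auto)
  moreover obtain \<delta> where "\<delta> > 0" and g'_inc: "\<And>h. 0 < h \<Longrightarrow> h < \<delta> \<Longrightarrow> g' 0 < g' h"
    using DERIV_pos_inc_right[OF g''] \<open>\<not> d \<le> 0\<close> by force
  define t where "t = min (min e e1) \<delta> / 2"
  have t: "0 < t" "t < e" "t < e1" "t < \<delta>" using e1 \<open>\<delta> > 0\<close> assms(2) by (auto simp: t_def)
  then obtain z where z: "0 < z" "z < t" "g t - g 0 = t * g' z"
    using MVT2[of 0 t g g'] g' by force
  ultimately have "g' z > 0" using g'_inc[of z] t by simp
  then have "g t > g 0" using mult_pos_pos[OF t(1)] z(3) by force
  with assms(3)[of t] t show False by simp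
qed

section \<open>Partial derivatives and harmonic functions\<close>

definition partial_deriv :: "'n \<Rightarrow> (real^'n \<Rightarrow> real) \<Rightarrow> real^'n \<Rightarrow> real" where
  "partial_deriv i g x = deriv (\<lambda>t. g (x + t *\<^sub>R axis i 1)) 0"

definition laplacian :: "(real^'n \<Rightarrow> real) \<Rightarrow> real^'n \<Rightarrow> real" where
  "laplacian u x = (\<Sum>i\<in>UNIV. partial_deriv i (partial_deriv i u) x)"

text \<open>Only the existence of the second partial derivatives along the axes is required, not
  their continuity: the maximum principle below needs no more.\<close>
definition harmonic :: "(real^'n \<Rightarrow> real) \<Rightarrow> bool" where
  "harmonic u \<longleftrightarrow> (\<forall>x. u differentiable (at x)) \<and> (\<forall>i x. partial_deriv i u differentiable (at x))
     \<and> (\<forall>x. laplacian u x = 0)"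

lemma has_derivative_line:
  assumes "(g has_derivative g') (at (x + t *\<^sub>R v))"
  shows "((\<lambda>s. g (x + s *\<^sub>R v)) has_real_derivative g' v) (at t)"
proof -
  have "((\<lambda>s. x + s *\<^sub>R v) has_derivative (\<lambda>h. h *\<^sub>R v)) (at t)"
    by (auto intro!: derivative_eq_intros)
  from has_derivative_compose[OF this assms]
  have "((\<lambda>s. g (x + s *\<^sub>R v)) has_derivative (\<lambda>h. g' (h *\<^sub>R v))) (at t)" .
  moreover have "g' (h *\<^sub>R v) = h * g' v" for h
    using has_derivative_bounded_linear[OF assms] by (simp add: linear_simps)
  ultimately show ?thesis
    by (simp add: has_field_derivative_def mult.commute[of _ "g' v"])
qed

lemma partial_deriv_eq:
  assumes "(g has_derivative g') (at x)"
  shows "partial_deriv i g x = g' (axis i 1)"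
  using has_derivative_line[of g g' x 0] assms unfolding partial_deriv_def by (simp add: DERIV_imp_deriv)

lemma has_real_derivative_partial_deriv:
  assumes "g differentiable (at (x + t *\<^sub>R axis i 1))"
  shows "((\<lambda>s. g (x + s *\<^sub>R axis i 1)) has_real_derivative partial_deriv i g (x + t *\<^sub>R axis i 1)) (at t)"
proof -
  obtain g' where "(g has_derivative g') (at (x + t *\<^sub>R axis i 1))"
    using assms unfolding differentiable_def by blast
  then show ?thesis using has_derivative_line partial_deriv_eq by metis
qed

lemma has_second_deriv_at_0_partial_deriv:
  assumes "\<And>y. u differentiable (at y)" "partial_deriv i u differentiable (at x)"
  shows "has_second_deriv_at_0 (\<lambda>t. u (x + t *\<^sub>R axis i 1)) (partial_deriv i (partial_deriv i u) x)"
  using assms has_real_derivative_partial_deriv[of u x _ i]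
    has_real_derivative_partial_deriv[of "partial_deriv i u" x 0 i]
  by (intro has_second_deriv_at_0I[of 1 _ "\<lambda>t. partial_deriv i u (x + t *\<^sub>R axis i 1)"]) auto

lemma harmonic_second_derivs:
  assumes "harmonic u"
  obtains d where "\<And>i. has_second_deriv_at_0 (\<lambda>t. u (x + t *\<^sub>R axis i 1)) (d i)" "sum d UNIV = 0"
  using that[of "\<lambda>i. partial_deriv i (partial_deriv i u) x"] assms
  unfolding harmonic_def laplacian_def by (simp add: has_second_deriv_at_0_partial_deriv)

lemma mvt_partial_deriv:
  assumes "\<And>y. g differentiable (at y)" "0 < h"
  obtains \<xi> where "0 < \<xi>" "\<xi> < h"
    "g (x + h *\<^sub>R axis i 1) - g x = h * partial_deriv i g (x + \<xi> *\<^sub>R axis i 1)"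
  using MVT2[OF assms(2), of "\<lambda>s. g (x + s *\<^sub>R axis i 1)"] assms(1)
    has_real_derivative_partial_deriv[of g x _ i] by force

lemma second_difference_mvt:
  assumes "\<And>y. u differentiable (at y)" "\<And>y. partial_deriv i u differentiable (at y)" "0 < h"
  obtains \<xi> \<eta> where "0 < \<xi>" "\<xi> < h" "0 < \<eta>" "\<eta> < h"
    "u (x + h *\<^sub>R axis i 1 + h *\<^sub>R axis j 1) - u (x + h *\<^sub>R axis i 1) - u (x + h *\<^sub>R axis j 1) + u x
       = h * h * partial_deriv j (partial_deriv i u) (x + \<xi> *\<^sub>R axis i 1 + \<eta> *\<^sub>R axis j 1)"
proof -
  define ei where "ei = axis i (1::real)"
  define ej where "ej = axis j (1::real)"
  have "((\<lambda>r. u (x + h *\<^sub>R ej + r *\<^sub>R ei) - u (x + r *\<^sub>R ei)) has_real_derivative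
          partial_deriv i u (x + h *\<^sub>R ej + r *\<^sub>R ei) - partial_deriv i u (x + r *\<^sub>R ei)) (at r)" for r
    unfolding ei_def using assms(1) by (intro DERIV_diff has_real_derivative_partial_deriv)
  then obtain \<xi> where \<xi>: "0 < \<xi>" "\<xi> < h"
    "(u (x + h *\<^sub>R ej + h *\<^sub>R ei) - u (x + h *\<^sub>R ei)) - (u (x + h *\<^sub>R ej) - u x)
       = h * (partial_deriv i u (x + \<xi> *\<^sub>R ei + h *\<^sub>R ej) - partial_deriv i u (x + \<xi> *\<^sub>R ei))"
    using MVT2[OF assms(3), of "\<lambda>r. u (x + h *\<^sub>R ej + r *\<^sub>R ei) - u (x + r *\<^sub>R ei)"]
    by (force simp: add.commute add.left_commute)
  obtain \<eta> where \<eta>: "0 < \<eta>" "\<eta> < h"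
    "partial_deriv i u (x + \<xi> *\<^sub>R ei + h *\<^sub>R ej) - partial_deriv i u (x + \<xi> *\<^sub>R ei)
       = h * partial_deriv j (partial_deriv i u) (x + \<xi> *\<^sub>R ei + \<eta> *\<^sub>R ej)"
    using mvt_partial_deriv[OF assms(2,3)] unfolding ej_def by metis
  show ?thesis
    by (rule that[OF \<xi>(1,2) \<eta>(1,2)]) (use \<xi>(3) \<eta>(3) in \<open>simp add: ei_def ej_def algebra_simps\<close>)
qed

lemma dist_add_axes:
  assumes "\<bar>a\<bar> < r" "\<bar>b\<bar> < r"
  shows "dist (x + a *\<^sub>R axis i (1::real) + b *\<^sub>R axis j 1) x < 2 * r"
proof -
  have "dist (x + a *\<^sub>R axis i (1::real) + b *\<^sub>R axis j 1) x = norm (a *\<^sub>R axis i (1::real) + b *\<^sub>R axis j 1)"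
    by (simp add: dist_norm)
  also have "\<dots> \<le> norm (a *\<^sub>R axis i (1::real)) + norm (b *\<^sub>R axis j (1::real))"
    by (rule norm_triangle_ineq)
  finally show ?thesis using assms by simp
qed

lemma partial_deriv_commute:
  fixes u :: "real^'n \<Rightarrow> real"
  assumes du: "\<And>y. u differentiable (at y)"
    and di: "\<And>y. partial_deriv i u differentiable (at y)"
    and dj: "\<And>y. partial_deriv j u differentiable (at y)"
    and cij: "continuous_on UNIV (partial_deriv j (partial_deriv i u))"
    and cji: "continuous_on UNIV (partial_deriv i (partial_deriv j u))"
  shows "partial_deriv j (partial_deriv i u) x = partial_deriv i (partial_deriv j u) x"
proof -
  let ?D1 = "partial_deriv j (partial_deriv i u) x" and ?D2 = "partial_deriv i (partial_deriv j u) x"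
  have "\<bar>?D1 - ?D2\<bar> < 2 * e" if "e > 0" for e
  proof -
    obtain r1 where "r1 > 0" and r1: "\<And>y. dist y x < r1 \<Longrightarrow> dist (partial_deriv j (partial_deriv i u) y) ?D1 < e"
      using cij \<open>e > 0\<close> unfolding continuous_on_iff by blast
    obtain r2 where "r2 > 0" and r2: "\<And>y. dist y x < r2 \<Longrightarrow> dist (partial_deriv i (partial_deriv j u) y) ?D2 < e"
      using cji \<open>e > 0\<close> unfolding continuous_on_iff by blast
    define h where "h = min r1 r2 / 2"
    have h: "h > 0" "2 * h \<le> r1" "2 * h \<le> r2" using \<open>r1 > 0\<close> \<open>r2 > 0\<close> by (auto simp: h_def)
    obtain \<xi> \<eta> where \<xi>\<eta>: "0 < \<xi>" "\<xi> < h" "0 < \<eta>" "\<eta> < h" and Q1: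
      "u (x + h *\<^sub>R axis i 1 + h *\<^sub>R axis j 1) - u (x + h *\<^sub>R axis i 1) - u (x + h *\<^sub>R axis j 1) + u x
         = h * h * partial_deriv j (partial_deriv i u) (x + \<xi> *\<^sub>R axis i 1 + \<eta> *\<^sub>R axis j 1)"
      using second_difference_mvt[OF du di h(1)] by metis
    obtain \<xi>' \<eta>' where \<xi>\<eta>': "0 < \<xi>'" "\<xi>' < h" "0 < \<eta>'" "\<eta>' < h" and Q2:
      "u (x + h *\<^sub>R axis j 1 + h *\<^sub>R axis i 1) - u (x + h *\<^sub>R axis j 1) - u (x + h *\<^sub>R axis i 1) + u x
         = h * h * partial_deriv i (partial_deriv j u) (x + \<xi>' *\<^sub>R axis j 1 + \<eta>' *\<^sub>R axis i 1)"
      using second_difference_mvt[OF du dj h(1)] by metis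
    have "dist (x + \<xi> *\<^sub>R axis i 1 + \<eta> *\<^sub>R axis j 1) x < r1"
      using dist_add_axes[of \<xi> h \<eta> x i j] \<xi>\<eta> h by simp
    moreover have "dist (x + \<xi>' *\<^sub>R axis j 1 + \<eta>' *\<^sub>R axis i 1) x < r2"
      using dist_add_axes[of \<xi>' h \<eta>' x j i] \<xi>\<eta>' h by simp
    ultimately have "\<bar>partial_deriv j (partial_deriv i u) (x + \<xi> *\<^sub>R axis i 1 + \<eta> *\<^sub>R axis j 1) - ?D1\<bar> < e"
      "\<bar>partial_deriv i (partial_deriv j u) (x + \<xi>' *\<^sub>R axis j 1 + \<eta>' *\<^sub>R axis i 1) - ?D2\<bar> < e"
      using r1 r2 unfolding dist_real_def by blast+
    moreover have "partial_deriv j (partial_deriv i u) (x + \<xi> *\<^sub>R axis i 1 + \<eta> *\<^sub>R axis j 1)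
        = partial_deriv i (partial_deriv j u) (x + \<xi>' *\<^sub>R axis j 1 + \<eta>' *\<^sub>R axis i 1)"
      using Q1 Q2 h(1) by (simp add: algebra_simps)
    ultimately show ?thesis by linarith
  qed
  from this[of "\<bar>?D1 - ?D2\<bar> / 2"] show ?thesis by (cases "?D1 = ?D2") auto
qed

section \<open>Liouville's theorem for bounded harmonic functions\<close>

definition reflect :: "'n \<Rightarrow> real \<Rightarrow> real^'n \<Rightarrow> real^'n" where
  "reflect k a x = x + (2 * (a - x$k)) *\<^sub>R axis k 1"

lemma reflect_component: "reflect k a x $ j = (if j = k then 2 * a - x$k else x$j)"
  by (simp add: reflect_def axis_def)

lemma reflect_add_axis:
  "reflect k a (x + t *\<^sub>R axis i 1)
     = (if i = k then reflect k a x - t *\<^sub>R axis i 1 else reflect k a x + t *\<^sub>R axis i 1)"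
  by (simp add: vec_eq_iff reflect_component axis_def)

lemma reflect_reflect [simp]: "reflect k a (reflect k a x) = x"
  by (simp add: vec_eq_iff reflect_component)

lemma reflect_fixed: "x$k = a \<Longrightarrow> reflect k a x = x"
  by (simp add: vec_eq_iff reflect_component)

lemma continuous_on_reflect: "continuous_on S (reflect k a)"
  unfolding reflect_def by (intro continuous_intros)

lemma harmonic_reflect_second_derivs:
  assumes "harmonic u"
  obtains d where "\<And>i. has_second_deriv_at_0 (\<lambda>t. u (reflect k a (x + t *\<^sub>R axis i 1))) (d i)"
    "sum d UNIV = 0"
proof -
  obtain d where d: "\<And>i. has_second_deriv_at_0 (\<lambda>t. u (reflect k a x + t *\<^sub>R axis i 1)) (d i)"
    "sum d UNIV = 0"
    using harmonic_second_derivs[OF assms] by blast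
  have "has_second_deriv_at_0 (\<lambda>t. u (reflect k a (x + t *\<^sub>R axis i 1))) (d i)" for i
    using d(1)[of i] has_second_deriv_at_0_reflect[OF d(1)[of i]] by (cases "i = k") (simp_all add: reflect_add_axis)
  with d(2) that show ?thesis by blast
qed

lemma norm_add_axis_squared:
  "(norm (y + t *\<^sub>R axis i (1::real)))\<^sup>2 = (norm y)\<^sup>2 + 2 * t * y$i + t\<^sup>2"
  unfolding power2_norm_eq_inner
  by (simp add: inner_add_left inner_add_right inner_axis inner_axis' algebra_simps power2_eq_square)

text \<open>The constant (n+1) makes the Laplacian of the barrier equal to 2nB - 2(n+1)B = -2B < 0.\<close>
definition barrier :: "'n \<Rightarrow> real \<Rightarrow> real^'n \<Rightarrow> real \<Rightarrow> real \<Rightarrow> real^'n \<Rightarrow> real" where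
  "barrier k a p A B x = A * (x$k - a) + B * (norm (x - p))\<^sup>2 - (real CARD('n) + 1) * B * (x$k - a)\<^sup>2"

lemma barrier_second_derivs:
  fixes k :: "'n::finite"
  obtains d where "\<And>i. has_second_deriv_at_0 (\<lambda>t. barrier k a p A B (x + t *\<^sub>R axis i 1)) (d i)"
    "sum d UNIV = - 2 * B"
proof -
  define c where "c = real CARD('n) + 1"
  define d where "d i = 2 * (B - (if i = k then c * B else 0))" for i
  have "has_second_deriv_at_0 (\<lambda>t. barrier k a p A B (x + t *\<^sub>R axis i 1)) (d i)" for i
  proof -
    have norm_line: "(norm (x + t *\<^sub>R axis i 1 - p))\<^sup>2 = (norm (x - p))\<^sup>2 + 2 * t * (x - p)$i + t\<^sup>2" for t
      using norm_add_axis_squared[of "x - p" t i] by (simp add: diff_add_eq)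
    have "barrier k a p A B (x + t *\<^sub>R axis i 1)
        = barrier k a p A B x
          + (A * (if i = k then 1 else 0) + 2 * B * (x - p)$i - 2 * c * B * (x$k - a) * (if i = k then 1 else 0)) * t
          + (B - (if i = k then c * B else 0)) * t\<^sup>2" for t
      unfolding barrier_def c_def norm_line
      by (cases "i = k") (simp_all add: axis_def algebra_simps power2_eq_square)
    then show ?thesis
      using has_second_deriv_at_0_quadratic unfolding d_def by presburger
  qed
  moreover have "sum d UNIV = - 2 * B"
    by (simp add: d_def c_def sum.distrib sum_subtractf algebra_simps flip: sum_distrib_left)
  ultimately show ?thesis using that by blast
qed

lemma max_principle_strictly_subharmonic:
  fixes \<phi> :: "real^'n \<Rightarrow> real"
  assumes "compact K" "open U" "U \<subseteq> K" "continuous_on K \<phi>"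
    and boundary: "\<And>x. x \<in> K - U \<Longrightarrow> \<phi> x \<le> 0"
    and subharmonic: "\<And>x. x \<in> U \<Longrightarrow>
      \<exists>d. (\<forall>i. has_second_deriv_at_0 (\<lambda>t. \<phi> (x + t *\<^sub>R axis i 1)) (d i)) \<and> sum d UNIV > 0"
    and "x \<in> K"
  shows "\<phi> x \<le> 0"
proof -
  obtain q where q: "q \<in> K" "\<And>y. y \<in> K \<Longrightarrow> \<phi> y \<le> \<phi> q"
    using continuous_attains_sup[OF assms(1) _ assms(4)] \<open>x \<in> K\<close> by blast
  have "q \<notin> U"
  proof
    assume "q \<in> U"
    then obtain e where "e > 0" "ball q e \<subseteq> U"
      using \<open>open U\<close> open_contains_ball by blast
    obtain d where d: "\<And>i. has_second_deriv_at_0 (\<lambda>t. \<phi> (q + t *\<^sub>R axis i 1)) (d i)" "sum d UNIV > 0"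
      using subharmonic[OF \<open>q \<in> U\<close>] by blast
    have "d i \<le> 0" for i
    proof (rule has_second_deriv_at_0_local_max[OF d(1) \<open>e > 0\<close>])
      fix t :: real
      assume "\<bar>t\<bar> < e"
      then have "q + t *\<^sub>R axis i 1 \<in> ball q e" by (simp add: dist_norm)
      then have "q + t *\<^sub>R axis i 1 \<in> K" using \<open>ball q e \<subseteq> U\<close> \<open>U \<subseteq> K\<close> by blast
      then show "\<phi> (q + t *\<^sub>R axis i 1) \<le> \<phi> (q + 0 *\<^sub>R axis i 1)" using q by simp
    qed
    then have "sum d UNIV \<le> 0" by (simp add: sum_nonpos)
    with d(2) show False by simp
  qed
  then show ?thesis using q boundary \<open>x \<in> K\<close> by (meson DiffI order_trans)
qed

lemma harmonic_continuous: "harmonic u \<Longrightarrow> continuous_on S u"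
  unfolding harmonic_def by (meson continuous_at_imp_continuous_on differentiable_imp_continuous_within)

lemma barrier_ge:
  fixes k :: "'n::finite"
  assumes "a \<le> x$k" "x$k \<le> a + H" "A \<ge> 0" "B \<ge> 0"
  shows "barrier k a p A B x \<ge> A * (x$k - a) + B * (norm (x - p))\<^sup>2 - (real CARD('n) + 1) * B * H\<^sup>2"
proof -
  have "(x$k - a)\<^sup>2 \<le> H\<^sup>2" using assms(1,2) by (simp add: power_mono)
  then have "(real CARD('n) + 1) * B * (x$k - a)\<^sup>2 \<le> (real CARD('n) + 1) * B * H\<^sup>2"
    using assms(4) by (simp add: mult_left_mono)
  then show ?thesis unfolding barrier_def by linarith
qed

lemma harmonic_reflect_diff_barrier_second_derivs:
  assumes "harmonic u"
  obtains d where "\<And>i. has_second_deriv_at_0 (\<lambda>t. \<sigma> * (u (x + t *\<^sub>R axis i 1) - u (reflect k a (x + t *\<^sub>R axis i 1)))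
      - barrier k a p A B (x + t *\<^sub>R axis i 1)) (d i)" "sum d UNIV = 2 * B"
proof -
  obtain du where du: "\<And>i. has_second_deriv_at_0 (\<lambda>t. u (x + t *\<^sub>R axis i 1)) (du i)" "sum du UNIV = 0"
    using harmonic_second_derivs[OF assms] by blast
  obtain dr where dr: "\<And>i. has_second_deriv_at_0 (\<lambda>t. u (reflect k a (x + t *\<^sub>R axis i 1))) (dr i)"
    "sum dr UNIV = 0"
    using harmonic_reflect_second_derivs[OF assms] by blast
  obtain dw where dw: "\<And>i. has_second_deriv_at_0 (\<lambda>t. barrier k a p A B (x + t *\<^sub>R axis i 1)) (dw i)"
    "sum dw UNIV = - 2 * B"
    using barrier_second_derivs by blast
  have "(\<Sum>i\<in>UNIV. \<sigma> * (du i - dr i) - dw i) = 2 * B"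
    using du(2) dr(2) dw(2) by (simp add: sum_subtractf flip: sum_distrib_left)
  with du(1) dr(1) dw(1) show ?thesis
    by (intro that[of "\<lambda>i. \<sigma> * (du i - dr i) - dw i"] has_second_deriv_at_0_diff has_second_deriv_at_0_cmult)
qed

lemma harmonic_reflect_diff_le:
  fixes u :: "real^'n \<Rightarrow> real"
  assumes u: "harmonic u" and bnd: "\<And>x. \<bar>u x\<bar> \<le> M" and "M > 0" and "\<bar>\<sigma>\<bar> = 1"
    and "H > 0" and p: "a \<le> p$k" "p$k \<le> a + H"
  shows "\<sigma> * (u p - u (reflect k a p)) \<le> 4 * M * (p$k - a) / H"
proof -
  define c where "c = real CARD('n) + 1"
  define A where "A = 4 * M / H"
  define B where "B = 2 * M / (c * H\<^sup>2)"
  define R where "R = 2 * c * H"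
  \<comment> \<open>chosen so that w \<ge> 2 M on the faces x_k = a + H and \<bar>x - p\<bar> = R of K\<close>
  define w where "w = barrier k a p A B"
  define \<phi> where "\<phi> x = \<sigma> * (u x - u (reflect k a x)) - w x" for x
  define K where "K = {x. a \<le> x$k} \<inter> {x. x$k \<le> a + H} \<inter> cball p R"
  define U where "U = {x. a < x$k} \<inter> {x. x$k < a + H} \<inter> ball p R"
  have "c \<ge> 1" "A > 0" "B > 0" using \<open>M > 0\<close> \<open>H > 0\<close> by (simp_all add: c_def A_def B_def)
  have AH: "A * H = 4 * M" and CB: "c * B * H\<^sup>2 = 2 * M" and BR: "B * R\<^sup>2 = 8 * c * M"
    using \<open>H > 0\<close> \<open>c \<ge> 1\<close> by (simp_all add: A_def B_def R_def field_simps power2_eq_square)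
  have diff_le: "\<sigma> * (u x - u (reflect k a x)) \<le> 2 * M" for x
    using bnd[of x] bnd[of "reflect k a x"] \<open>\<bar>\<sigma>\<bar> = 1\<close> by (auto simp: abs_if split: if_splits)
  have boundary: "\<phi> x \<le> 0" if xKU: "x \<in> K - U" for x
  proof -
    have x: "a \<le> x$k" "x$k \<le> a + H" "dist p x \<le> R" using xKU by (auto simp: K_def)
    have w_ge: "w x \<ge> A * (x$k - a) + B * (norm (x - p))\<^sup>2 - c * B * H\<^sup>2"
      using barrier_ge[OF x(1,2)] \<open>A > 0\<close> \<open>B > 0\<close> by (simp add: w_def c_def)
    consider "x$k = a" | "x$k = a + H" | "dist p x = R" using xKU x unfolding U_def by fastforce
    then show ?thesis
    proof cases
      case 1
      then show ?thesis using \<open>B > 0\<close> by (simp add: \<phi>_def w_def barrier_def reflect_fixed)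
    next
      case 2
      moreover have "B * (norm (x - p))\<^sup>2 \<ge> 0" using \<open>B > 0\<close> by simp
      ultimately have "w x \<ge> 2 * M" using w_ge AH CB by simp
      then show ?thesis using diff_le[of x] by (simp add: \<phi>_def)
    next
      case 3
      then have "norm (x - p) = R" by (simp add: dist_norm norm_minus_commute)
      moreover have "A * (x$k - a) \<ge> 0" using \<open>A > 0\<close> x(1) by simp
      ultimately have "w x \<ge> B * R\<^sup>2 - c * B * H\<^sup>2" using w_ge by simp
      also have "B * R\<^sup>2 - c * B * H\<^sup>2 \<ge> 2 * M" using BR CB \<open>c \<ge> 1\<close> \<open>M > 0\<close> by simp
      finally show ?thesis using diff_le[of x] by (simp add: \<phi>_def)
    qed
  qed
  have "\<phi> p \<le> 0"
  proof (rule max_principle_strictly_subharmonic[OF _ _ _ _ boundary])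
    show "compact K" unfolding K_def
      by (intro closed_Int_compact closed_Int closed_halfspace_component_ge_cart
          closed_halfspace_component_le_cart compact_cball)
    show "open U" unfolding U_def
      by (intro open_Int open_halfspace_component_gt_cart open_halfspace_component_lt_cart open_ball)
    show "U \<subseteq> K" unfolding U_def K_def by auto
    show "continuous_on K \<phi>" unfolding \<phi>_def w_def barrier_def
      by (intro continuous_intros harmonic_continuous[OF u]
          continuous_on_compose2[OF harmonic_continuous[OF u] continuous_on_reflect]) auto
    show "\<exists>d. (\<forall>i. has_second_deriv_at_0 (\<lambda>t. \<phi> (x + t *\<^sub>R axis i 1)) (d i)) \<and> sum d UNIV > 0" for x
    proof -
      obtain d where "\<And>i. has_second_deriv_at_0 (\<lambda>t. \<phi> (x + t *\<^sub>R axis i 1)) (d i)" "sum d UNIV = 2 * B"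
        using harmonic_reflect_diff_barrier_second_derivs[OF u, where \<sigma>=\<sigma> and x=x and k=k and a=a and p=p
            and A=A and B=B]
        unfolding \<phi>_def w_def by blast
      then show ?thesis using \<open>B > 0\<close> by (intro exI[of _ d]) auto
    qed
    show "p \<in> K" using p \<open>H > 0\<close> \<open>c \<ge> 1\<close> by (simp add: K_def R_def)
  qed
  moreover have "w p \<le> A * (p$k - a)" using \<open>B > 0\<close> by (simp add: w_def barrier_def)
  ultimately show ?thesis by (simp add: \<phi>_def A_def)
qed

lemma harmonic_bounded_reflect_eq:
  assumes u: "harmonic u" and "bounded (range u)"
  shows "u (reflect k a p) = u p"
proof -
  obtain M where "M > 0" and bnd: "\<And>x. \<bar>u x\<bar> \<le> M"
    using \<open>bounded (range u)\<close> by (auto simp: bounded_pos)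
  have eq: "u (reflect k a p) = u p" if "a \<le> p$k" for p
  proof -
    have "\<sigma> * (u p - u (reflect k a p)) \<le> 0" if "\<bar>\<sigma>\<bar> = 1" for \<sigma>
    proof (rule ccontr)
      define s where "s = \<sigma> * (u p - u (reflect k a p))"
      define H where "H = (p$k - a) * (1 + 4 * M / s) + 1"
      assume "\<not> ?thesis"
      then have "s > 0" by (simp add: s_def)
      have "(p$k - a) * (4 * M / s) \<ge> 0" using \<open>a \<le> p$k\<close> \<open>M > 0\<close> \<open>s > 0\<close> by simp
      then have "H > 0" "p$k \<le> a + H" using \<open>a \<le> p$k\<close> by (simp_all add: H_def algebra_simps)
      then have "s \<le> 4 * M * (p$k - a) / H"
        using harmonic_reflect_diff_le[OF u bnd \<open>M > 0\<close> \<open>\<bar>\<sigma>\<bar> = 1\<close> _ \<open>a \<le> p$k\<close>] by (simp add: s_def)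
      then have "s * H \<le> 4 * M * (p$k - a)" using \<open>H > 0\<close> by (simp add: field_simps)
      moreover have "s * H = s * (p$k - a) + 4 * M * (p$k - a) + s"
        using \<open>s > 0\<close> by (simp add: H_def field_simps)
      ultimately show False using \<open>s > 0\<close> \<open>a \<le> p$k\<close> by (smt (verit) mult_nonneg_nonneg)
    qed
    from this[of 1] this[of "-1"] show ?thesis by simp
  qed
  show ?thesis
  proof (cases "a \<le> p$k")
    case False
    then have "a \<le> reflect k a p $ k" by (simp add: reflect_component)
    from eq[OF this] show ?thesis by simp
  qed (rule eq)
qed

theorem harmonic_bounded_const:
  fixes u :: "real^'n \<Rightarrow> real"
  assumes "harmonic u" "bounded (range u)"
  shows "u x = u y"
proof -
  have translate: "u (z + s *\<^sub>R axis k 1) = u z" for z s k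
    using harmonic_bounded_reflect_eq[OF assms, of k "z$k + s / 2" z] by (simp add: reflect_def)
  have "u (z + (\<Sum>i\<in>S. c i *\<^sub>R axis i 1)) = u z" if "finite S" for S z c
    using that
  proof (induction S arbitrary: z rule: finite_induct)
    case (insert j S)
    then show ?case using translate[of "z + (\<Sum>i\<in>S. c i *\<^sub>R axis i 1)" "c j" j]
      by (simp add: ac_simps)
  qed simp
  moreover have "y = x + (\<Sum>i\<in>UNIV. (y - x)$i *\<^sub>R axis i 1)"
    using basis_expansion[of "y - x"] by (simp add: scalar_mult_eq_scaleR)
  ultimately show ?thesis by (metis finite)
qed

section \<open>The Clifford algebra R_{0,3}\<close>

definition blade_flip :: "nat \<Rightarrow> blade \<Rightarrow> blade" where
  "blade_flip k B = (if k = 0 then B else Abs_blade (symd (Rep_blade B) k))"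

definition flip_sign :: "nat \<Rightarrow> blade \<Rightarrow> real" where
  "flip_sign k B = (if k = 0 then 1 else csign k (symd (Rep_blade B) k))"

definition emul_conj :: "nat \<Rightarrow> cl03 \<Rightarrow> cl03" where
  "emul_conj k u = (if k = 0 then u else - emul k u)"

lemma emul_component: "emul k u $ B = flip_sign k B * u $ blade_flip k B"
  by (simp add: emul_def blade_flip_def flip_sign_def)

lemma emul_0 [simp]: "emul 0 u = u"
  by (simp add: emul_def)

lemma linear_emul: "linear (emul k)"
  by (auto simp: linear_iff vec_eq_iff emul_component algebra_simps)

lemma linear_emul_conj: "linear (emul_conj k)"
  using linear_emul[of k] by (auto simp: emul_conj_def linear_iff)

lemma symd_symd [simp]: "symd (symd A k) k = A"
  by (auto simp: symd_def)

lemma symd_commute: "symd (symd A i) k = symd (symd A k) i"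
  by (auto simp: symd_def)

lemma Rep_blade_subset: "Rep_blade B \<subseteq> {1,2,3}"
  using Rep_blade[of B] by blast

lemma csign_symd_square: "csign k (symd A k) * csign k A = -1"
proof -
  have "{j \<in> symd A k. j < k} = {j \<in> A. j < k}" by (auto simp: symd_def)
  then show ?thesis by (simp add: csign_def symd_def power_mult_distrib[symmetric])
qed

lemma subset_123_cases:
  assumes "A \<subseteq> {1,2,3::nat}"
  shows "A = {} \<or> A = {1} \<or> A = {2} \<or> A = {3} \<or> A = {1,2} \<or> A = {1,3} \<or> A = {2,3} \<or> A = {1,2,3}"
proof -
  have "A = (if 1 \<in> A then {1} else {}) \<union> (if 2 \<in> A then {2} else {}) \<union> (if 3 \<in> A then {3} else {})"
    using assms by auto
  then show ?thesis by (simp split: if_splits) (simp_all add: insert_commute)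
qed

lemma csign_symd_anticomm:
  assumes "A \<subseteq> {1,2,3}" "0 < i" "i < 4" "0 < k" "k < 4" "i \<noteq> k"
  shows "csign i (symd A i) * csign k (symd (symd A i) k) = - (csign k (symd A k) * csign i (symd (symd A k) i))"
proof -
  have coll: "{j \<in> A. j < k} = A \<inter> {..<k}" for A :: "nat set" and k by auto
  have "i = 1 \<or> i = 2 \<or> i = 3" "k = 1 \<or> k = 2 \<or> k = 3" using assms(2-5) by auto
  then show ?thesis
    using subset_123_cases[OF assms(1)] assms(6)
    apply (elim disjE)
    apply (simp_all add: symd_def insert_Diff_if insert_commute)
    apply (simp_all only: csign_def coll)
    by (simp_all add: Int_insert_left)
qed

lemma Rep_blade_flip:
  assumes "0 < k" "k < 4"
  shows "Rep_blade (blade_flip k B) = symd (Rep_blade B) k"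
proof -
  have "symd (Rep_blade B) k \<in> Pow {1,2,3}" using assms Rep_blade_subset[of B] by (auto simp: symd_def)
  then show ?thesis using assms by (simp add: blade_flip_def Abs_blade_inverse)
qed

lemma emul_emul_component:
  assumes "0 < i" "i < 4" "0 < k"
  shows "emul i (emul k u) $ B = csign i (symd (Rep_blade B) i) * csign k (symd (symd (Rep_blade B) i) k)
           * u $ Abs_blade (symd (symd (Rep_blade B) i) k)"
  using assms
  by (simp add: emul_component flip_sign_def Rep_blade_flip blade_flip_def[of k "blade_flip i B"])

lemma emul_conj_zero [simp]: "emul_conj k 0 = 0"
  by (simp add: emul_conj_def vec_eq_iff emul_component)

lemma emul_conj_emul_same:
  assumes "k < 4" shows "emul_conj k (emul k u) = u"
proof (cases "k = 0")
  case False
  have "- emul k (emul k u) $ B = u $ B" for B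
    using csign_symd_square[of k "Rep_blade B"] False assms
    by (simp add: emul_emul_component Rep_blade_inverse)
  then show ?thesis using False by (simp add: emul_conj_def vec_eq_iff)
qed (simp add: emul_conj_def)

lemma emul_anticomm:
  assumes "0 < i" "i < 4" "0 < k" "k < 4" "i \<noteq> k"
  shows "emul i (emul k u) = - emul k (emul i u)"
proof -
  have "emul i (emul k u) $ B = - emul k (emul i u) $ B" for B
    using csign_symd_anticomm[OF Rep_blade_subset assms] assms
    by (simp add: emul_emul_component symd_commute[of _ i k])
  then show ?thesis by (simp add: vec_eq_iff)
qed

lemma emul_conj_emul_anticomm:
  assumes "i < 4" "k < 4" "i \<noteq> k"
  shows "emul_conj i (emul k u) = - emul_conj k (emul i u)"
  using assms emul_anticomm[of i k u] by (auto simp: emul_conj_def)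

lemma sum_antisym_offdiag:
  fixes a :: "'a \<Rightarrow> 'a \<Rightarrow> 'b::real_vector"
  assumes "finite I" and anti: "\<And>i k. i \<in> I \<Longrightarrow> k \<in> I \<Longrightarrow> i \<noteq> k \<Longrightarrow> a k i = - a i k"
  shows "(\<Sum>i\<in>I. \<Sum>k\<in>I. a i k) = (\<Sum>i\<in>I. a i i)"
proof -
  define b where "b i k = (if i = k then 0 else a i k)" for i k
  let ?S = "\<Sum>i\<in>I. \<Sum>k\<in>I. b i k"
  have b_anti: "b i k = - b k i" if "i \<in> I" "k \<in> I" for i k
    using anti[OF that(2,1)] by (auto simp: b_def)
  have "?S = (\<Sum>k\<in>I. \<Sum>i\<in>I. b i k)" by (rule sum.swap)
  also have "\<dots> = (\<Sum>k\<in>I. \<Sum>i\<in>I. - b k i)"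
    by (auto intro!: sum.cong b_anti)
  also have "\<dots> = - ?S" by (simp add: sum_negf)
  finally have "(2::real) *\<^sub>R ?S = 0" by (metis eq_neg_iff_add_eq_0 scaleR_2)
  then have "?S = 0" by simp
  have "(\<Sum>i\<in>I. \<Sum>k\<in>I. a i k) = (\<Sum>i\<in>I. \<Sum>k\<in>I. b i k + (if i = k then a i i else 0))"
    by (intro sum.cong refl) (simp add: b_def)
  also have "\<dots> = ?S + (\<Sum>i\<in>I. \<Sum>k\<in>I. if i = k then a i i else 0)"
    by (simp add: sum.distrib)
  also have "\<dots> = (\<Sum>i\<in>I. a i i)" using \<open>?S = 0\<close> \<open>finite I\<close> by simp
  finally show ?thesis .
qed

text \<open>The algebraic content of conj(D) D = \<Delta>.\<close>
lemma emul_conj_Dirac_symmetric: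
  fixes S :: "nat \<Rightarrow> nat \<Rightarrow> cl03"
  assumes "\<And>i k. i < 4 \<Longrightarrow> k < 4 \<Longrightarrow> S i k = S k i"
  shows "(\<Sum>i<4. emul_conj i (\<Sum>k<4. emul k (S i k))) = (\<Sum>i<4. S i i)"
proof -
  have "(\<Sum>i<4. emul_conj i (\<Sum>k<4. emul k (S i k))) = (\<Sum>i<4. \<Sum>k<4. emul_conj i (emul k (S i k)))"
    by (simp add: linear_sum[OF linear_emul_conj] o_def)
  also have "\<dots> = (\<Sum>i<4. emul_conj i (emul i (S i i)))"
  proof (rule sum_antisym_offdiag)
    fix i k :: nat
    assume "i \<in> {..<4}" "k \<in> {..<4}" "i \<noteq> k"
    then show "emul_conj k (emul i (S k i)) = - emul_conj i (emul k (S i k))"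
      using assms[of i k] emul_conj_emul_anticomm[of k i] by simp
  qed simp
  also have "\<dots> = (\<Sum>i<4. S i i)" by (simp add: emul_conj_emul_same)
  finally show ?thesis .
qed

section \<open>Calculus for R_{0,3}-valued functions on R^4\<close>

lemma UNIV_4_eq: "(UNIV :: 4 set) = of_nat ` {..<4}"
proof -
  have "{..<4::nat} = {0, 1, 2, 3}" by auto
  then have "of_nat ` {..<4} = {0, 1, 2, 3::4}" by simp
  moreover have "(4::4) = 0" by simp
  ultimately show ?thesis using exhaust_4 by blast
qed

lemma sum_UNIV_4: "(\<Sum>i\<in>UNIV. F i) = (\<Sum>k<4. F (of_nat k :: 4))"
proof -
  have "card (of_nat ` {..<4} :: 4 set) = card {..<4::nat}"
    by (simp flip: UNIV_4_eq)
  then have "inj_on (of_nat :: nat \<Rightarrow> 4) {..<4}"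
    by (simp add: inj_on_iff_eq_card)
  then show ?thesis by (simp add: UNIV_4_eq sum.reindex)
qed

lemma pd_eq_partial_deriv: "pd k = partial_deriv (of_nat k :: 4)"
  by (simp add: fun_eq_iff pd_def partial_deriv_def)

lemma laplacian_4: "laplacian u x = (\<Sum>k<4. pd k (pd k u) x)"
  by (simp add: laplacian_def sum_UNIV_4 pd_eq_partial_deriv)

lemma pdv_component: "pdv k G y $ B = pd k (\<lambda>y. G y $ B) y"
  by (simp add: pdv_def)

lemma lap_component: "lap G x $ B = (\<Sum>k<4. pd k (pd k (\<lambda>y. G y $ B)) x)"
  by (simp add: lap_def pdv_def pdv_component)

lemma pdv_eq:
  assumes "(G has_derivative G') (at x)"
  shows "pdv k G x = G' (axis (of_nat k) 1)"
proof -
  have "((\<lambda>y. G y $ B) has_derivative (\<lambda>h. G' h $ B)) (at x)" for B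
    using bounded_linear.has_derivative[OF bounded_linear_vec_nth assms] .
  then have "partial_deriv i (\<lambda>y. G y $ B) x = G' (axis i 1) $ B" for i B
    by (rule partial_deriv_eq)
  then show ?thesis by (simp add: vec_eq_iff pdv_def pd_eq_partial_deriv)
qed

lemma pdv_linear:
  assumes "bounded_linear L" "G differentiable (at x)"
  shows "pdv k (\<lambda>y. L (G y)) x = L (pdv k G x)"
proof -
  obtain G' where "(G has_derivative G') (at x)" using assms(2) unfolding differentiable_def by blast
  with bounded_linear.has_derivative[OF assms(1) this] show ?thesis by (simp add: pdv_eq)
qed

lemma pdv_sum:
  assumes "finite J" "\<And>j. j \<in> J \<Longrightarrow> G j differentiable (at x)"
  shows "pdv k (\<lambda>y. \<Sum>j\<in>J. G j y) x = (\<Sum>j\<in>J. pdv k (G j) x)"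
proof -
  obtain G' where G': "\<And>j. j \<in> J \<Longrightarrow> (G j has_derivative G' j) (at x)"
    using assms(2) unfolding differentiable_def by metis
  have "((\<lambda>y. \<Sum>j\<in>J. G j y) has_derivative (\<lambda>h. \<Sum>j\<in>J. G' j h)) (at x)"
    using G' by (rule has_derivative_sum)
  then have "pdv k (\<lambda>y. \<Sum>j\<in>J. G j y) x = (\<Sum>j\<in>J. G' j (axis (of_nat k) 1))"
    by (rule pdv_eq)
  also have "\<dots> = (\<Sum>j\<in>J. pdv k (G j) x)"
    using pdv_eq[OF G'] by simp
  finally show ?thesis .
qed

lemma pdv_const: "pdv k (\<lambda>y. c) x = 0"
  by (simp add: pdv_eq[of _ "\<lambda>_. 0"])

lemma bounded_linear_emul: "bounded_linear (emul k)"
  using linear_emul linear_conv_bounded_linear by blast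

lemma differentiable_emul: "G differentiable (at x) \<Longrightarrow> (\<lambda>y. emul k (G y)) differentiable (at x)"
  unfolding differentiable_def using bounded_linear.has_derivative[OF bounded_linear_emul] by blast

lemma differentiable_component: "G differentiable (at x) \<Longrightarrow> (\<lambda>y. G y $ B) differentiable (at x)"
  unfolding differentiable_def using bounded_linear.has_derivative[OF bounded_linear_vec_nth] by blast

lemma differentiable_cartI:
  fixes G :: "'a::real_normed_vector \<Rightarrow> real^'n"
  assumes "\<And>B. (\<lambda>y. G y $ B) differentiable (at x)"
  shows "G differentiable (at x)"
proof -
  have "(\<lambda>y. G y \<bullet> b) differentiable (at x)" if b: "b \<in> Basis" for b
  proof -
    obtain B and u :: real where "u \<in> Basis" "b = axis B u" using b unfolding Basis_vec_def by blast
    then have "b = axis B 1" by simp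
    then show ?thesis using assms[of B] by (simp add: inner_axis)
  qed
  then show ?thesis by (subst differentiable_componentwise_within) blast
qed

lemma pdv_sum_emul:
  assumes "\<And>k. k < 4 \<Longrightarrow> G k differentiable (at x)"
  shows "pdv i (\<lambda>y. \<Sum>k<4. emul k (G k y)) x = (\<Sum>k<4. emul k (pdv i (G k) x))"
proof -
  have "pdv i (\<lambda>y. \<Sum>k<4. emul k (G k y)) x = (\<Sum>k<4. pdv i (\<lambda>y. emul k (G k y)) x)"
    by (rule pdv_sum) (simp_all add: differentiable_emul assms)
  also have "\<dots> = (\<Sum>k<4. emul k (pdv i (G k) x))"
    by (intro sum.cong refl) (simp add: pdv_linear[OF bounded_linear_emul] assms)
  finally show ?thesis .
qed

lemma bounded_range_sum:
  fixes G :: "'i \<Rightarrow> 'a \<Rightarrow> 'b::real_normed_vector"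
  assumes "finite J" "\<And>j. j \<in> J \<Longrightarrow> bounded (range (G j))"
  shows "bounded (range (\<lambda>x. \<Sum>j\<in>J. G j x))"
  using assms by (induction J rule: finite_induct) (auto intro: bounded_plus_comp)

lemma bounded_range_cartI:
  fixes G :: "'a \<Rightarrow> real^'n"
  assumes "\<And>B. bounded (range (\<lambda>x. G x $ B))"
  shows "bounded (range G)"
proof -
  obtain M where M: "\<And>B x. \<bar>G x $ B\<bar> \<le> M B"
    using assms unfolding bounded_iff by (metis rangeI real_norm_def)
  have "norm (G x) \<le> (\<Sum>B\<in>UNIV. M B)" for x
    using norm_le_l1_cart[of "G x"] sum_mono[of UNIV "\<lambda>B. \<bar>G x $ B\<bar>" M] M by (meson order_trans)
  then show ?thesis unfolding bounded_iff by blast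
qed

lemma C3_pds:
  assumes "C3 g" "\<forall>k\<in>set ks. k < 4"
  shows "length ks < 3 \<Longrightarrow> pds ks g differentiable (at x)"
    and "length ks \<le> 3 \<Longrightarrow> continuous_on UNIV (pds ks g)"
proof -
  have "set ks \<subseteq> {0..3}" using assms(2) by auto
  then show "length ks < 3 \<Longrightarrow> pds ks g differentiable (at x)"
    and "length ks \<le> 3 \<Longrightarrow> continuous_on UNIV (pds ks g)"
    using assms(1) unfolding C3_def by blast+
qed

lemma pd_commute:
  assumes "\<And>x. g differentiable (at x)" "\<And>x. pd j g differentiable (at x)" "\<And>x. pd k g differentiable (at x)"
    and "continuous_on UNIV (pd j (pd k g))" "continuous_on UNIV (pd k (pd j g))"
  shows "pd j (pd k g) = pd k (pd j g)"
  using partial_deriv_commute[of g "of_nat k" "of_nat j"] assms by (simp add: fun_eq_iff pd_eq_partial_deriv)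

context
  fixes f :: "real^4 \<Rightarrow> cl03"
  assumes C3: "\<And>B. C3 (\<lambda>x. f x $ B)"
begin

lemma C3_differentiable: "f differentiable (at x)"
  using C3_pds(1)[OF C3, of "[]"] by (intro differentiable_cartI) simp

lemma C3_pdv_differentiable: "k < 4 \<Longrightarrow> pdv k f differentiable (at x)"
  using C3_pds(1)[OF C3, of "[k]"] by (intro differentiable_cartI) (simp add: pdv_component)

lemma C3_pdv2_differentiable: "j < 4 \<Longrightarrow> k < 4 \<Longrightarrow> pdv j (pdv k f) differentiable (at x)"
  using C3_pds(1)[OF C3, of "[j, k]"] by (intro differentiable_cartI) (simp add: pdv_component)

lemma C3_pdv_commute:
  assumes "j < 4" "k < 4"
  shows "pdv j (pdv k f) = pdv k (pdv j f)"
proof -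
  have "pd j (pd k (\<lambda>x. f x $ B)) = pd k (pd j (\<lambda>x. f x $ B))" for B
    using assms C3_pds[OF C3, of "[]"] C3_pds[OF C3, of "[j]"] C3_pds[OF C3, of "[k]"]
      C3_pds[OF C3, of "[j, k]"] C3_pds[OF C3, of "[k, j]"]
    by (intro pd_commute) auto
  then show ?thesis by (simp add: fun_eq_iff vec_eq_iff pdv_def pdv_component)
qed

lemma C3_pdv3_commute:
  assumes "i < 4" "k < 4"
  shows "pdv i (pdv i (pdv k f)) = pdv k (pdv i (pdv i f))"
proof -
  have "pd i (pd k (pd i (\<lambda>x. f x $ B))) = pd k (pd i (pd i (\<lambda>x. f x $ B)))" for B
    using assms C3_pds[OF C3, of "[i]"] C3_pds[OF C3, of "[i, i]"] C3_pds[OF C3, of "[k, i]"]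
      C3_pds[OF C3, of "[i, k, i]"] C3_pds[OF C3, of "[k, i, i]"]
    by (intro pd_commute) auto
  then have "pdv i (pdv k (pdv i f)) = pdv k (pdv i (pdv i f))"
    by (simp add: fun_eq_iff vec_eq_iff pdv_def pdv_component)
  then show ?thesis using C3_pdv_commute[OF assms] by simp
qed

lemma C3_pdv_Dop: "i < 4 \<Longrightarrow> pdv i (Dop f) = (\<lambda>y. \<Sum>k<4. emul k (pdv i (pdv k f) y))"
  unfolding Dop_def by (simp add: fun_eq_iff pdv_sum_emul C3_pdv_differentiable)

lemma C3_Dop_differentiable: "Dop f differentiable (at x)"
  unfolding Dop_def by (simp add: differentiable_emul C3_pdv_differentiable)

lemma C3_pdv_Dop_differentiable: "i < 4 \<Longrightarrow> pdv i (Dop f) differentiable (at x)"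
  by (simp add: C3_pdv_Dop differentiable_emul C3_pdv2_differentiable)

lemma C3_lap_Dop: "lap (Dop f) x = Dop (lap f) x"
proof -
  have "pdv i (pdv i (Dop f)) x = (\<Sum>k<4. emul k (pdv k (pdv i (pdv i f)) x))" if "i < 4" for i
    using that by (simp add: C3_pdv_Dop pdv_sum_emul C3_pdv2_differentiable C3_pdv3_commute)
  then have "lap (Dop f) x = (\<Sum>i<4. \<Sum>k<4. emul k (pdv k (pdv i (pdv i f)) x))"
    unfolding lap_def by simp
  also have "\<dots> = (\<Sum>k<4. \<Sum>i<4. emul k (pdv k (pdv i (pdv i f)) x))"
    by (rule sum.swap)
  also have "\<dots> = (\<Sum>k<4. emul k (pdv k (\<lambda>y. \<Sum>i<4. pdv i (pdv i f) y) x))"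
  proof (rule sum.cong[OF refl])
    fix k
    have "pdv k (\<lambda>y. \<Sum>i<4. pdv i (pdv i f) y) x = (\<Sum>i<4. pdv k (pdv i (pdv i f)) x)"
      by (rule pdv_sum) (simp_all add: C3_pdv2_differentiable)
    then show "(\<Sum>i<4. emul k (pdv k (pdv i (pdv i f)) x)) = emul k (pdv k (\<lambda>y. \<Sum>i<4. pdv i (pdv i f) y) x)"
      by (simp add: linear_sum[OF linear_emul] o_def)
  qed
  also have "\<dots> = Dop (lap f) x"
    unfolding Dop_def lap_def ..
  finally show ?thesis .
qed

lemma C3_lap_eq_conj_Dirac: "lap f x = (\<Sum>i<4. emul_conj i (pdv i (Dop f) x))"
proof -
  have "(\<Sum>i<4. emul_conj i (\<Sum>k<4. emul k (pdv i (pdv k f) x))) = (\<Sum>i<4. pdv i (pdv i f) x)"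
    by (rule emul_conj_Dirac_symmetric) (simp add: C3_pdv_commute)
  then show ?thesis by (simp add: lap_def C3_pdv_Dop)
qed

end

lemma bounded_range_Dop:
  assumes "\<And>k. k < 4 \<Longrightarrow> bounded (range (pdv k f))"
  shows "bounded (range (Dop f))"
  unfolding Dop_def
proof (rule bounded_range_sum)
  fix k :: nat
  assume "k \<in> {..<4}"
  then have "bounded (emul k ` range (pdv k f))"
    using assms bounded_linear_image bounded_linear_emul by blast
  then show "bounded (range (\<lambda>x. emul k (pdv k f x)))" by (simp add: image_image)
qed simp

lemma cl03_harmonic_bounded_const:
  fixes G :: "real^4 \<Rightarrow> cl03"
  assumes "\<And>x. G differentiable (at x)" "\<And>k x. k < 4 \<Longrightarrow> pdv k G differentiable (at x)"
    and "\<And>x. lap G x = 0" and "bounded (range G)"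
  shows "G x = G y"
proof -
  have "harmonic (\<lambda>x. G x $ B)" for B
    unfolding harmonic_def
  proof (intro conjI allI)
    fix x
    show "(\<lambda>x. G x $ B) differentiable (at x)" using assms(1) by (rule differentiable_component)
    show "laplacian (\<lambda>x. G x $ B) x = 0" using lap_component[of G x B] assms(3) by (simp add: laplacian_4)
    fix i :: 4
    obtain k where "k < 4" "i = of_nat k" using UNIV_4_eq by blast
    then show "partial_deriv i (\<lambda>x. G x $ B) differentiable (at x)"
      using differentiable_component[where B=B, OF assms(2)[OF \<open>k < 4\<close>]] by (simp add: pdv_def pd_eq_partial_deriv)
  qed
  moreover have "bounded (range (\<lambda>x. G x $ B))" for B
    using bounded_component_cart[OF assms(4)] by (simp add: image_image)
  ultimately have "G x $ B = G y $ B" for B by (rule harmonic_bounded_const)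
  then show ?thesis by (simp add: vec_eq_iff)
qed

theorem mainTheorem1:
  fixes f :: "real^4 \<Rightarrow> cl03"
  assumes "holo_cliff f"
    and "\<forall>B ks. set ks \<subseteq> {0..3} \<and> length ks \<le> 2 \<longrightarrow>
           bounded (range (pds ks (\<lambda>x. f x $ B)))"
  shows "\<exists>c. \<forall>x. f x = c"
proof -
  have C3: "\<And>B. C3 (\<lambda>x. f x $ B)" and DL: "\<And>x. Dop (lap f) x = 0"
    using assms(1) by (auto simp: holo_cliff_def)
  \<comment> \<open>only the bounds of order 0 and 1 are needed\<close>
  have bnd: "bounded (range (pds ks (\<lambda>x. f x $ B)))" if "set ks \<subseteq> {0..3}" "length ks \<le> 2" for ks B
    using assms(2) that by blast
  have "bounded (range f)"
    using bnd[of "[]"] by (intro bounded_range_cartI) simp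
  moreover have "bounded (range (pdv k f))" if "k < 4" for k
    using bnd[of "[k]"] that by (intro bounded_range_cartI) (simp add: pdv_def)
  ultimately have "Dop f x = Dop f y" for x y
    using C3_Dop_differentiable[OF C3] C3_pdv_Dop_differentiable[OF C3] C3_lap_Dop[OF C3] DL
    by (intro cl03_harmonic_bounded_const bounded_range_Dop) auto
  then have pdv_Dop: "pdv i (Dop f) x = 0" for i x
    using pdv_const[of i "Dop f 0" x] by (metis ext)
  have "lap f x = 0" for x
    using C3_lap_eq_conj_Dirac[OF C3, of x] by (simp add: pdv_Dop)
  then have "f x = f 0" for x
    using \<open>bounded (range f)\<close> C3_differentiable[OF C3] C3_pdv_differentiable[OF C3]
    by (intro cl03_harmonic_bounded_const) auto
  then show ?thesis by blast
qed

end
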